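(* Let $K$ be a field of characteristic $p>0$ such that $K/k$ is a finitely generated field extension, where $k=\bigcap_{n\ge0}K^{p^n}$. Let $n$ be a positive integer. The map $W_\bullet\mapsto W_n$ is a bijection from the set of power towers on $K$ of length $n$ to the set of subfields of $K$ of exponent $n$.
   Context: A power tower on $K$ is a sequence of subfields $W_0,W_1,\ldots$ of $K$ with $W_j=W_i\cdot K^{p^j}$ whenever $j\le i$ ($\cdot$ = compositum in $K$). It has length $n$ if $n$ is the least integer with $W_N=W_n$ for all $N\ge n$. A subfield $W\subseteq K$ has exponent $n$ if $n$ is the least integer with $K^{p^n}\subseteq W$. *)

theory Defs
  imports Main
begin

text \<open>Subfields of a field (the ambient field K is the type 'a).\<close>
definition is_subfield :: "'a::field set \<Rightarrow> bool" where
  "is_subfield F \<longleftrightarrow> 0 \<in> F \<and> 1 \<in> F \<and>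
     (\<forall>x\<in>F. \<forall>y\<in>F. x + y \<in> F \<and> x * y \<in> F) \<and>
     (\<forall>x\<in>F. - x \<in> F \<and> inverse x \<in> F)"

definition gen_field :: "'a::field set \<Rightarrow> 'a set" where
  "gen_field S = \<Inter>{F. is_subfield F \<and> S \<subseteq> F}"

definition compositum :: "'a::field set \<Rightarrow> 'a set \<Rightarrow> 'a set" where
  "compositum A B = gen_field (A \<union> B)"

definition frob_image :: "nat \<Rightarrow> 'a::field set" where
  "frob_image j = range (\<lambda>x::'a. x ^ (CHAR('a) ^ j))"

definition perfect_core :: "'a::field set" where
  "perfect_core = (\<Inter>n. frob_image n)"

definition fin_gen_over :: "'a::field set \<Rightarrow> bool" where
  "fin_gen_over k \<longleftrightarrow> (\<exists>S. finite S \<and> gen_field (k \<union> S) = UNIV)"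

definition power_tower :: "(nat \<Rightarrow> 'a::field set) \<Rightarrow> bool" where
  "power_tower W \<longleftrightarrow> (\<forall>i. is_subfield (W i)) \<and>
     (\<forall>i j. j \<le> i \<longrightarrow> W j = compositum (W i) (frob_image j))"

definition tower_length :: "(nat \<Rightarrow> 'a::field set) \<Rightarrow> nat \<Rightarrow> bool" where
  "tower_length W n \<longleftrightarrow> (\<forall>N\<ge>n. W N = W n) \<and> (\<forall>m<n. \<not> (\<forall>N\<ge>m. W N = W m))"

definition field_exponent :: "'a::field set \<Rightarrow> nat \<Rightarrow> bool" where
  "field_exponent W n \<longleftrightarrow> frob_image n \<subseteq> W \<and> (\<forall>m<n. \<not> frob_image m \<subseteq> W)"

end

theory Submission
  imports Defs
begin

(*
  A power tower is determined by any term W_n from which it is constant, through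
  W_j = W_n . K^(p^j) for all j; conversely every subfield V generates the power tower
  j |-> V . K^(p^j). A tower that is constant from n on is constant from m on exactly
  when K^(p^m) is contained in W_n, so the length of the tower equals the exponent of
  W_n.
*)

lemma gen_field_upper: "S \<subseteq> gen_field S"
  unfolding gen_field_def by blast

lemma gen_field_least: "is_subfield F \<Longrightarrow> S \<subseteq> F \<Longrightarrow> gen_field S \<subseteq> F"
  unfolding gen_field_def by blast

lemma is_subfield_gen_field: "is_subfield (gen_field S)"
  unfolding gen_field_def is_subfield_def by blast

lemma gen_field_mono: "S \<subseteq> T \<Longrightarrow> gen_field S \<subseteq> gen_field T"
  by (meson gen_field_least gen_field_upper is_subfield_gen_field order_trans)

lemma gen_field_subfield_eq: "is_subfield F \<Longrightarrow> gen_field F = F"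
  using gen_field_upper gen_field_least by blast

lemma compositum_upper1: "A \<subseteq> compositum A B"
  unfolding compositum_def using gen_field_upper by blast

lemma compositum_upper2: "B \<subseteq> compositum A B"
  unfolding compositum_def using gen_field_upper by blast

lemma is_subfield_compositum: "is_subfield (compositum A B)"
  unfolding compositum_def by (rule is_subfield_gen_field)

lemma compositum_absorb: "is_subfield A \<Longrightarrow> B \<subseteq> A \<Longrightarrow> compositum A B = A"
  unfolding compositum_def by (simp add: Un_absorb2 gen_field_subfield_eq)

lemma compositum_compositum_right:
  assumes "B \<subseteq> C"
  shows "compositum (compositum A B) C = compositum A C"
proof
  have "gen_field (A \<union> B) \<subseteq> gen_field (A \<union> C)"
    using assms by (intro gen_field_mono) blast
  moreover have "C \<subseteq> gen_field (A \<union> C)"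
    using gen_field_upper by blast
  ultimately show "compositum (compositum A B) C \<subseteq> compositum A C"
    unfolding compositum_def by (rule gen_field_least[OF is_subfield_gen_field Un_least])
  show "compositum A C \<subseteq> compositum (compositum A B) C"
    unfolding compositum_def
    using gen_field_upper[of "A \<union> B"] by (intro gen_field_mono) blast
qed

lemma frob_image_antimono: "j \<le> i \<Longrightarrow> frob_image i \<subseteq> (frob_image j :: 'a::field set)"
proof
  fix y :: 'a
  assume "j \<le> i" and "y \<in> frob_image i"
  then obtain x where "y = x ^ (CHAR('a) ^ (i - j + j))"
    unfolding frob_image_def by auto
  then have "y = (x ^ (CHAR('a) ^ (i - j))) ^ (CHAR('a) ^ j)"
    by (simp add: power_add power_mult)
  then show "y \<in> frob_image j"
    unfolding frob_image_def by blast
qed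

abbreviation stable_from :: "(nat \<Rightarrow> 'b) \<Rightarrow> nat \<Rightarrow> bool" where
  "stable_from W m \<equiv> \<forall>N\<ge>m. W N = W m"

lemma power_tower_eq: "power_tower W \<Longrightarrow> j \<le> i \<Longrightarrow> W j = compositum (W i) (frob_image j)"
  unfolding power_tower_def by blast

lemma power_tower_subfield: "power_tower W \<Longrightarrow> is_subfield (W i)"
  unfolding power_tower_def by blast

lemma power_tower_frob_image_subset: "power_tower W \<Longrightarrow> frob_image j \<subseteq> W j"
  by (metis compositum_upper2 order_refl power_tower_eq)

lemma power_tower_antimono: "power_tower W \<Longrightarrow> j \<le> i \<Longrightarrow> W i \<subseteq> W j"
  by (metis compositum_upper1 power_tower_eq)

lemma power_tower_stable_subset:
  assumes "power_tower W" and "stable_from W n"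
  shows "W n \<subseteq> W N"
proof (cases "N \<le> n")
  case True
  with assms(1) show ?thesis by (rule power_tower_antimono)
next
  case False
  then show ?thesis using assms(2)[rule_format, of N] by simp
qed

lemma power_tower_stable_from_iff:
  assumes W: "power_tower W" and n: "stable_from W n"
  shows "stable_from W m \<longleftrightarrow> frob_image m \<subseteq> W n"
proof
  assume m: "stable_from W m"
  have "W m = W n"
    using m[rule_format, OF max.cobounded1, of n] n[rule_format, OF max.cobounded2, of m] by simp
  then show "frob_image m \<subseteq> W n"
    using power_tower_frob_image_subset[OF W, of m] by simp
next
  assume sub: "frob_image m \<subseteq> W n"
  show "stable_from W m"
  proof (intro allI impI)
    fix N assume "m \<le> N"
    with W have "W m = compositum (W N) (frob_image m)"
      by (rule power_tower_eq)
    also have "\<dots> = W N"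
    proof (rule compositum_absorb[OF power_tower_subfield[OF W]])
      show "frob_image m \<subseteq> W N"
        using sub power_tower_stable_subset[OF W n] by (rule order_trans)
    qed
    finally show "W N = W m" by simp
  qed
qed

lemma power_tower_length_iff_exponent:
  assumes "power_tower W" and "stable_from W n"
  shows "tower_length W n \<longleftrightarrow> field_exponent (W n) n"
  using assms(2)
  by (simp only: tower_length_def field_exponent_def power_tower_stable_from_iff[OF assms])

definition compositum_tower :: "'a::field set \<Rightarrow> nat \<Rightarrow> 'a set" where
  "compositum_tower V j = compositum V (frob_image j)"

lemma power_tower_compositum_tower: "power_tower (compositum_tower V)"
  unfolding power_tower_def compositum_tower_def
proof (intro conjI allI impI is_subfield_compositum)
  fix i j :: nat
  assume "j \<le> i"
  then show "compositum V (frob_image j) = compositum (compositum V (frob_image i)) (frob_image j)"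
    by (intro compositum_compositum_right[symmetric] frob_image_antimono)
qed

lemma compositum_tower_eq_exponent:
  assumes "is_subfield V" and "field_exponent V n" and "n \<le> N"
  shows "compositum_tower V N = V"
proof -
  have "frob_image N \<subseteq> V"
    using frob_image_antimono[OF assms(3)] assms(2) unfolding field_exponent_def by blast
  then show ?thesis
    unfolding compositum_tower_def by (rule compositum_absorb[OF assms(1)])
qed

lemma compositum_tower_limit:
  assumes W: "power_tower W" and n: "stable_from W n"
  shows "compositum_tower (W n) = W"
proof
  fix j
  show "compositum_tower (W n) j = W j"
  proof (cases "j \<le> n")
    case True
    with W show ?thesis
      unfolding compositum_tower_def by (rule power_tower_eq[symmetric])
  next
    case False
    then have "W n = W j" using n[rule_format, of j] by simp
    moreover have "compositum (W j) (frob_image j) = W j"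
      using W order_refl by (rule power_tower_eq[symmetric])
    ultimately show ?thesis
      unfolding compositum_tower_def by simp
  qed
qed

lemma compositum_tower_length:
  assumes "is_subfield V" and "field_exponent V n"
  shows "tower_length (compositum_tower V) n"
proof -
  have eq_V: "compositum_tower V N = V" if "n \<le> N" for N
    using assms that by (rule compositum_tower_eq_exponent)
  then have "stable_from (compositum_tower V) n"
    by simp
  with power_tower_compositum_tower
  have "tower_length (compositum_tower V) n \<longleftrightarrow> field_exponent (compositum_tower V n) n"
    by (rule power_tower_length_iff_exponent)
  then show ?thesis
    using assms(2) eq_V[of n] by simp
qed

lemma tower_length_stable_from: "tower_length W n \<Longrightarrow> stable_from W n"
  unfolding tower_length_def by blast

theorem mainTheorem9:
  assumes "CHAR('a::field) > 0"
    and "fin_gen_over (perfect_core :: 'a set)"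
    and "n > 0"
  shows "bij_betw (\<lambda>W. W n)
           {W :: nat \<Rightarrow> 'a set. power_tower W \<and> tower_length W n}
           {V :: 'a set. is_subfield V \<and> field_exponent V n}"
proof (rule bij_betw_byWitness[where f' = compositum_tower])
  show "\<forall>W \<in> {W. power_tower W \<and> tower_length W n}. compositum_tower (W n) = W"
    using compositum_tower_limit tower_length_stable_from by blast
  show "\<forall>V \<in> {V. is_subfield V \<and> field_exponent V n}. compositum_tower V n = V"
    using compositum_tower_eq_exponent by blast
  show "(\<lambda>W. W n) ` {W. power_tower W \<and> tower_length W n}
          \<subseteq> {V. is_subfield V \<and> field_exponent V n}"
    using power_tower_subfield power_tower_length_iff_exponent tower_length_stable_from by blast
  show "compositum_tower ` {V. is_subfield V \<and> field_exponent V n}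
          \<subseteq> {W. power_tower W \<and> tower_length W n}"
    using power_tower_compositum_tower compositum_tower_length by blast
qed

end
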